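(* For finite $n\geq2$, the class of completely representable algebras in $TA_n$ is elementary; indeed it is axiomatized by a finite set of first-order sentences (namely $\Sigma_n$ together with the sentence expressing atomicity of the Boolean reduct), and it coincides with the class of atomic members of $TA_n$.
   Context: $TA_n=\mathbf{Mod}(\Sigma_n)$, where $\Sigma_n$ is a finite set of equations consisting of the Boolean algebra axioms, the equations saying each $s_{ij}$ ($i\neq j<n$) is a Boolean endomorphism, and equations $t_1(x)=t_2(x)$ for words $t_1,t_2$ in the $s_{ij}$ whose associated compositions of transpositions coincide in $S_n$ (finitely many suffice). A complete representation of $\mathfrak A$ is an injective homomorphism $f:\mathfrak A\to\wp(V)$, $V$ permutable (closed under $s\mapsto s\circ[i,j]$), with $f(\prod Y)=\bigcap f[Y]$ whenever $\prod Y$ exists; here $\wp(V)=\langle\mathcal P(V);\cap,-,S_{ij}\rangle$, $S_{ij}(Y)=\{q\in V:q\circ[i,j]\in Y\}$. *)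

theory Defs
  imports Main "HOL-Library.FuncSet" "HOL-Combinatorics.Transposition"
begin

text \<open>An algebra of the signature of TA_n is a Boolean algebra (the carrier is the
  type 'a, its Boolean reduct is the class instance) together with unary operations
  s i j (only those with i \<noteq> j, i, j < n are relevant).\<close>

definition word_ok :: "nat \<Rightarrow> (nat \<times> nat) list \<Rightarrow> bool" where
  "word_ok n w \<longleftrightarrow> (\<forall>(i,j)\<in>set w. i \<noteq> j \<and> i < n \<and> j < n)"

definition word_op :: "(nat \<Rightarrow> nat \<Rightarrow> 'a \<Rightarrow> 'a) \<Rightarrow> (nat \<times> nat) list \<Rightarrow> 'a \<Rightarrow> 'a" where
  "word_op s w = foldr (\<lambda>(i,j) g. s i j \<circ> g) w id"

definition word_perm :: "(nat \<times> nat) list \<Rightarrow> nat \<Rightarrow> nat" where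
  "word_perm w = foldr (\<lambda>(i,j) p. transpose i j \<circ> p) w id"

definition TA :: "nat \<Rightarrow> (nat \<Rightarrow> nat \<Rightarrow> 'a::boolean_algebra \<Rightarrow> 'a) \<Rightarrow> bool" where
  "TA n s \<longleftrightarrow>
     (\<forall>i<n. \<forall>j<n. i \<noteq> j \<longrightarrow>
        (\<forall>x y. s i j (inf x y) = inf (s i j x) (s i j y)) \<and>
        (\<forall>x. s i j (- x) = - s i j x)) \<and>
     (\<forall>w1 w2. word_ok n w1 \<and> word_ok n w2 \<and> word_perm w1 = word_perm w2
        \<longrightarrow> word_op s w1 = word_op s w2)"

definition is_atom :: "'a::boolean_algebra \<Rightarrow> bool" where
  "is_atom a \<longleftrightarrow> a \<noteq> bot \<and> (\<forall>b. b \<le> a \<longrightarrow> b = bot \<or> b = a)"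

definition atomic_BA :: "'a::boolean_algebra itself \<Rightarrow> bool" where
  "atomic_BA _ \<longleftrightarrow> (\<forall>x::'a. x \<noteq> bot \<longrightarrow> (\<exists>a. is_atom a \<and> a \<le> x))"

definition is_glb :: "'a::boolean_algebra set \<Rightarrow> 'a \<Rightarrow> bool" where
  "is_glb Y p \<longleftrightarrow> (\<forall>y\<in>Y. p \<le> y) \<and> (\<forall>z. (\<forall>y\<in>Y. z \<le> y) \<longrightarrow> z \<le> p)"

text \<open>n-ary sequences over base 'u are the functions on {..<n} (extensional).
  V is permutable if closed under q \<mapsto> q o [i,j].\<close>
definition permutable :: "nat \<Rightarrow> (nat \<Rightarrow> 'u) set \<Rightarrow> bool" where
  "permutable n V \<longleftrightarrow> V \<subseteq> extensional {..<n} \<and>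
     (\<forall>q\<in>V. \<forall>i<n. \<forall>j<n. i \<noteq> j \<longrightarrow> q \<circ> transpose i j \<in> V)"

definition S_op :: "(nat \<Rightarrow> 'u) set \<Rightarrow> nat \<Rightarrow> nat \<Rightarrow> (nat \<Rightarrow> 'u) set \<Rightarrow> (nat \<Rightarrow> 'u) set" where
  "S_op V i j Y = {q \<in> V. q \<circ> transpose i j \<in> Y}"

definition complete_rep ::
  "nat \<Rightarrow> (nat \<Rightarrow> nat \<Rightarrow> 'a::boolean_algebra \<Rightarrow> 'a) \<Rightarrow> (nat \<Rightarrow> 'u) set \<Rightarrow> ('a \<Rightarrow> (nat \<Rightarrow> 'u) set) \<Rightarrow> bool" where
  "complete_rep n s V f \<longleftrightarrow>
     permutable n V \<and>
     (\<forall>x. f x \<subseteq> V) \<and>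
     (\<forall>x y. f (inf x y) = f x \<inter> f y) \<and>
     (\<forall>x. f (- x) = V - f x) \<and>
     (\<forall>i<n. \<forall>j<n. i \<noteq> j \<longrightarrow> (\<forall>x. f (s i j x) = S_op V i j (f x))) \<and>
     inj f \<and>
     (\<forall>Y p. is_glb Y p \<longrightarrow> f p = V \<inter> (\<Inter>y\<in>Y. f y))"

end

theory Submission
  imports Defs
begin

text \<open>If the Boolean reduct is atomic, represent it over the base set of atoms: the point
  attached to an atom a and a word w is the sequence k \<mapsto> (a, \<sigma> k), where \<sigma> is the permutation
  of w, and it lies in the image of x iff a \<le> s_w x. This is well defined because the equations
  of Sigma_n make s_w depend only on \<sigma>; it is a homomorphism because every s_w is a Boolean
  automorphism, and it preserves all meets because both atoms and the s_w do.
  Conversely, suppose x \<noteq> 0 has no atom below it and the point q lies in the image of x.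
  The points containing q form a proper filter, and since every nonzero element below x
  splits into two disjoint nonzero parts, -x is the meet of the complements of those y \<le> x
  whose image misses q. A complete representation then puts q into the image of -x.\<close>

lemma foldr_comp_eq_comp_foldr:
  "foldr (\<lambda>(i,j) h. F i j \<circ> h) u g = foldr (\<lambda>(i,j) h. F i j \<circ> h) u id \<circ> g"
  by (induction u) (auto simp: comp_assoc)

lemma word_op_Nil [simp]: "word_op s [] = id"
  by (simp add: word_op_def)

lemma word_op_append: "word_op s (u @ v) = word_op s u \<circ> word_op s v"
  unfolding word_op_def by (simp, subst foldr_comp_eq_comp_foldr, simp)

lemma word_op_Cons [simp]: "word_op s ((i,j) # w) = s i j \<circ> word_op s w"
  by (simp add: word_op_def)

lemma word_op_snoc: "word_op s (w @ [(i,j)]) = word_op s w \<circ> s i j"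
  by (simp add: word_op_append)

lemma word_perm_Nil [simp]: "word_perm [] = id"
  by (simp add: word_perm_def)

lemma word_perm_append: "word_perm (u @ v) = word_perm u \<circ> word_perm v"
  unfolding word_perm_def by (simp, subst foldr_comp_eq_comp_foldr, simp)

lemma word_perm_Cons [simp]: "word_perm ((i,j) # w) = transpose i j \<circ> word_perm w"
  by (simp add: word_perm_def)

lemma word_perm_snoc: "word_perm (w @ [(i,j)]) = word_perm w \<circ> transpose i j"
  by (simp add: word_perm_append)

lemma word_perm_append_rev: "word_perm (w @ rev w) = id"
proof (induction w)
  case (Cons p w)
  obtain i j where p: "p = (i,j)" by (cases p)
  have "word_perm ((p # w) @ rev (p # w)) = transpose i j \<circ> word_perm (w @ rev w) \<circ> transpose i j"
    by (simp add: p word_perm_append comp_assoc)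
  then show ?case by (simp add: Cons.IH)
qed simp

lemma word_ok_append [simp]: "word_ok n (u @ v) \<longleftrightarrow> word_ok n u \<and> word_ok n v"
  by (auto simp: word_ok_def)

lemma word_ok_rev [simp]: "word_ok n (rev u) \<longleftrightarrow> word_ok n u"
  by (auto simp: word_ok_def)

lemma word_ok_Nil [simp]: "word_ok n []"
  by (simp add: word_ok_def)

lemma word_ok_single [simp]: "word_ok n [(i,j)] \<longleftrightarrow> i \<noteq> j \<and> i < n \<and> j < n"
  by (simp add: word_ok_def)

lemma word_perm_fixes_large: "word_ok n w \<Longrightarrow> n \<le> k \<Longrightarrow> word_perm w k = k"
proof (induction w)
  case (Cons p w)
  then show ?case by (cases p) (auto simp: word_ok_def transpose_def)
qed simp

lemma is_glb_iff: "is_glb Y p \<Longrightarrow> z \<le> p \<longleftrightarrow> (\<forall>y\<in>Y. z \<le> y)"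
  unfolding is_glb_def by (meson order_trans)

lemma is_glb_image_order_iso:
  assumes "mono g" "mono h" "\<And>x. g (h x) = x" "\<And>x. h (g x) = x" "is_glb Y p"
  shows "is_glb (g ` Y) (g p)"
  unfolding is_glb_def
proof (intro conjI ballI allI impI)
  show "y \<in> g ` Y \<Longrightarrow> g p \<le> y" for y
    using assms(1,5) by (auto simp: is_glb_def mono_def)
  show "z \<le> g p" if "\<forall>y\<in>g ` Y. z \<le> y" for z
  proof -
    have "h z \<le> y" if "y \<in> Y" for y
      using \<open>\<forall>y\<in>g ` Y. z \<le> y\<close> that assms(2,4) by (metis image_eqI monoD)
    then have "h z \<le> p" using assms(5) by (simp add: is_glb_def)
    then show ?thesis using assms(1,3) by (metis monoD)
  qed
qed

lemma atom_le_compl_iff: "is_atom a \<Longrightarrow> a \<le> - y \<longleftrightarrow> \<not> a \<le> y"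
  unfolding is_atom_def
  by (metis bot_unique inf.absorb_iff1 inf.cobounded1 inf_shunt le_inf_iff inf_compl_bot)

lemma atomic_eqI:
  fixes x y :: "'a::boolean_algebra"
  assumes "atomic_BA TYPE('a)" and same_atoms: "\<And>a. is_atom a \<Longrightarrow> a \<le> x \<longleftrightarrow> a \<le> y"
  shows "x = y"
proof -
  have "u \<le> v" if "\<And>a. is_atom a \<Longrightarrow> a \<le> u \<Longrightarrow> a \<le> v" for u v :: 'a
  proof (rule ccontr)
    assume "\<not> u \<le> v"
    then have "inf u (- v) \<noteq> bot" by (simp add: inf_shunt)
    then obtain a where "is_atom a" "a \<le> inf u (- v)"
      using assms(1) unfolding atomic_BA_def by blast
    then show False using that by (simp add: atom_le_compl_iff) blast
  qed
  then show ?thesis using same_atoms by (blast intro: antisym)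
qed

lemma non_atom_splits:
  assumes "w \<noteq> bot" "\<not> is_atom w"
  obtains b c where "b \<le> w" "c \<le> w" "b \<noteq> bot" "c \<noteq> bot" "inf b c = bot"
proof -
  obtain b where b: "b \<le> w" "b \<noteq> bot" "b \<noteq> w" using assms unfolding is_atom_def by blast
  have "inf w (- b) \<noteq> bot"
    using b by (metis antisym inf_shunt double_compl)
  moreover have "inf b (inf w (- b)) = bot" by (simp add: inf_commute inf_left_commute)
  ultimately show thesis using that[of b "inf w (- b)"] b by simp
qed

text \<open>P will be the proper filter of elements whose image contains a fixed point.\<close>

lemma is_glb_compl_if_no_atom_below:
  fixes x :: "'a::boolean_algebra"
  assumes no_atom: "\<nexists>a. is_atom a \<and> a \<le> x"
    and "\<not> P bot" and P_inf: "\<And>b c. P b \<Longrightarrow> P c \<Longrightarrow> P (inf b c)"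
  shows "is_glb {- y | y. y \<le> x \<and> \<not> P y} (- x)"
  unfolding is_glb_def
proof (intro conjI ballI allI impI)
  show "y \<in> {- y | y. y \<le> x \<and> \<not> P y} \<Longrightarrow> - x \<le> y" for y by auto
  fix z assume lower: "\<forall>y\<in>{- y | y. y \<le> x \<and> \<not> P y}. z \<le> y"
  show "z \<le> - x"
  proof (rule ccontr)
    assume "\<not> z \<le> - x"
    then have "inf z x \<noteq> bot" by (simp add: inf_shunt)
    moreover have "\<not> is_atom (inf z x)" using no_atom by auto
    ultimately obtain b c where bc: "b \<le> inf z x" "c \<le> inf z x" "b \<noteq> bot" "c \<noteq> bot" "inf b c = bot"
      by (rule non_atom_splits)
    then obtain d where d: "d \<le> inf z x" "d \<noteq> bot" "\<not> P d"
      using P_inf \<open>\<not> P bot\<close> by metis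
    then have "z \<le> - d" using lower by auto
    with d(1) have "d \<le> - d" by auto
    then show False using d(2) by (metis inf_absorb1 inf_compl_bot)
  qed
qed

lemma TA_word_op_hom:
  assumes "TA n s" "word_ok n w"
  shows "word_op s w (inf x y) = inf (word_op s w x) (word_op s w y)"
    and "word_op s w (- x) = - word_op s w x"
proof -
  have "(\<forall>x y. word_op s w (inf x y) = inf (word_op s w x) (word_op s w y))
      \<and> (\<forall>x. word_op s w (- x) = - word_op s w x)"
    using assms(2)
  proof (induction w)
    case (Cons p w)
    obtain i j where p: "p = (i,j)" by (cases p)
    have ok: "word_ok n w" "i < n" "j < n" "i \<noteq> j" using Cons.prems by (auto simp: word_ok_def p)
    have "\<forall>x y. s i j (inf x y) = inf (s i j x) (s i j y)" "\<forall>x. s i j (- x) = - s i j x"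
      using assms(1) ok unfolding TA_def by blast+
    with Cons.IH[OF ok(1)] show ?case by (simp add: p)
  qed simp
  then show "word_op s w (inf x y) = inf (word_op s w x) (word_op s w y)"
    and "word_op s w (- x) = - word_op s w x" by blast+
qed

lemma TA_word_op_eq:
  "TA n s \<Longrightarrow> word_ok n w1 \<Longrightarrow> word_ok n w2 \<Longrightarrow> word_perm w1 = word_perm w2
    \<Longrightarrow> word_op s w1 = word_op s w2"
  unfolding TA_def by blast

lemma TA_mono_word_op: "TA n s \<Longrightarrow> word_ok n w \<Longrightarrow> mono (word_op s w)"
  by (intro monoI) (metis TA_word_op_hom(1) inf.absorb_iff2 inf.cobounded1)

lemma TA_word_op_rev_inverse: "TA n s \<Longrightarrow> word_ok n w \<Longrightarrow> word_op s w (word_op s (rev w) x) = x"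
  using TA_word_op_eq[of n s "w @ rev w" "[]"]
  by (simp add: word_perm_append_rev word_op_append comp_def fun_eq_iff)

lemma TA_word_op_is_glb:
  assumes "TA n s" "word_ok n w" "is_glb Y p"
  shows "is_glb (word_op s w ` Y) (word_op s w p)"
proof (rule is_glb_image_order_iso[where h = "word_op s (rev w)"])
  show "mono (word_op s w)" "mono (word_op s (rev w))"
    using assms(1,2) by (simp_all add: TA_mono_word_op)
  show "word_op s w (word_op s (rev w) x) = x" "word_op s (rev w) (word_op s w x) = x" for x
    using TA_word_op_rev_inverse[OF assms(1), of w x] TA_word_op_rev_inverse[OF assms(1), of "rev w" x]
      assms(2) by simp_all
qed (fact assms(3))

lemma complete_embedding_imp_atomic:
  fixes f :: "'a::boolean_algebra \<Rightarrow> 'b set"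
  assumes "inj f" and f_inf: "\<And>x y. f (inf x y) = f x \<inter> f y" and f_compl: "\<And>x. f (- x) = V - f x"
    and f_glb: "\<And>Y p. is_glb Y p \<Longrightarrow> f p = V \<inter> (\<Inter>y\<in>Y. f y)"
  shows "atomic_BA TYPE('a)"
  unfolding atomic_BA_def
proof (intro allI impI, rule ccontr)
  fix x :: 'a
  assume "x \<noteq> bot" and no_atom: "\<nexists>a. is_atom a \<and> a \<le> x"
  have f_bot: "f bot = {}"
    using f_inf[of bot "- bot"] f_compl[of bot] by auto
  with \<open>inj f\<close> \<open>x \<noteq> bot\<close> obtain q where q: "q \<in> f x"
    by (metis equals0I inj_eq)
  let ?Y = "{- y | y. y \<le> x \<and> q \<notin> f y}"
  have "is_glb ?Y (- x)"
    by (rule is_glb_compl_if_no_atom_below[OF no_atom]) (simp_all add: f_bot f_inf)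
  moreover have "q \<in> V"
    using q f_compl[of "- x"] by simp
  then have "q \<in> V \<inter> (\<Inter>y\<in>?Y. f y)" by (auto simp: f_compl)
  ultimately have "q \<in> f (- x)" using f_glb by blast
  then show False using q by (simp add: f_compl)
qed

definition tagged_perm :: "nat \<Rightarrow> 'a \<Rightarrow> (nat \<times> nat) list \<Rightarrow> nat \<Rightarrow> 'a \<times> nat" where
  "tagged_perm n a w = (\<lambda>k. if k < n then (a, word_perm w k) else undefined)"

definition atom_points :: "nat \<Rightarrow> (nat \<Rightarrow> 'a::boolean_algebra \<times> nat) set" where
  "atom_points n = {tagged_perm n a w | a w. is_atom a \<and> word_ok n w}"

definition atom_rep ::
  "nat \<Rightarrow> (nat \<Rightarrow> nat \<Rightarrow> 'a::boolean_algebra \<Rightarrow> 'a) \<Rightarrow> 'a \<Rightarrow> (nat \<Rightarrow> 'a \<times> nat) set" where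
  "atom_rep n s x = {tagged_perm n a w | a w. is_atom a \<and> word_ok n w \<and> a \<le> word_op s w x}"

lemma tagged_perm_eqD:
  assumes "0 < n" "word_ok n w" "word_ok n w'" "tagged_perm n a w = tagged_perm n a' w'"
  shows "a = a'" and "word_perm w = word_perm w'"
proof -
  show "a = a'" using fun_cong[OF assms(4), of 0] assms(1) by (simp add: tagged_perm_def)
  show "word_perm w = word_perm w'"
  proof
    fix k show "word_perm w k = word_perm w' k"
      using fun_cong[OF assms(4), of k] word_perm_fixes_large[OF assms(2)]
        word_perm_fixes_large[OF assms(3)]
      by (cases "k < n") (simp_all add: tagged_perm_def)
  qed
qed

lemma tagged_perm_comp_transpose:
  assumes "i < n" "j < n"
  shows "tagged_perm n a w \<circ> transpose i j = tagged_perm n a (w @ [(i,j)])"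
proof
  fix k
  have "transpose i j k < n \<longleftrightarrow> k < n" using assms by (simp add: transpose_def)
  then show "(tagged_perm n a w \<circ> transpose i j) k = tagged_perm n a (w @ [(i,j)]) k"
    by (simp add: tagged_perm_def word_perm_snoc)
qed

lemma mem_atom_points: "is_atom a \<Longrightarrow> word_ok n w \<Longrightarrow> tagged_perm n a w \<in> atom_points n"
  unfolding atom_points_def by blast

lemma permutable_atom_points: "permutable n (atom_points n)"
  unfolding permutable_def
proof (intro conjI ballI allI impI)
  show "atom_points n \<subseteq> extensional {..<n}"
    by (auto simp: atom_points_def extensional_def tagged_perm_def)
  show "q \<circ> transpose i j \<in> atom_points n"
    if q: "q \<in> atom_points n" and ij: "i < n" "j < n" "i \<noteq> j" for q i j
  proof -
    obtain a w where "is_atom a" "word_ok n w" "q = tagged_perm n a w"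
      using q unfolding atom_points_def by blast
    then show ?thesis using ij by (simp add: tagged_perm_comp_transpose mem_atom_points)
  qed
qed

lemma atom_rep_subset: "atom_rep n s x \<subseteq> atom_points n"
  unfolding atom_rep_def atom_points_def by blast

lemma atom_points_eqI:
  assumes "A \<subseteq> atom_points n" "B \<subseteq> atom_points n"
    and "\<And>a w. is_atom a \<Longrightarrow> word_ok n w \<Longrightarrow> tagged_perm n a w \<in> A \<longleftrightarrow> tagged_perm n a w \<in> B"
  shows "A = B"
proof (rule set_eqI)
  fix q show "q \<in> A \<longleftrightarrow> q \<in> B"
  proof (cases "q \<in> atom_points n")
    case True
    then obtain a w where "is_atom a" "word_ok n w" "q = tagged_perm n a w"
      unfolding atom_points_def by blast
    then show ?thesis using assms(3) by simp
  qed (use assms(1,2) in blast)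
qed

text \<open>Well-definedness: a point determines its atom and the permutation of its word,
  and by the equations of TA_n the permutation determines the word operation.\<close>

lemma mem_atom_rep_iff:
  assumes "TA n s" "0 < n" "is_atom a" "word_ok n w"
  shows "tagged_perm n a w \<in> atom_rep n s x \<longleftrightarrow> a \<le> word_op s w x"
proof
  assume "tagged_perm n a w \<in> atom_rep n s x"
  then obtain a' w' where w': "word_ok n w'" "a' \<le> word_op s w' x"
    and eq: "tagged_perm n a w = tagged_perm n a' w'"
    unfolding atom_rep_def by blast
  have "word_op s w = word_op s w'"
    using TA_word_op_eq[OF assms(1,4) w'(1)] tagged_perm_eqD(2)[OF assms(2,4) w'(1) eq] .
  with w'(2) tagged_perm_eqD(1)[OF assms(2,4) w'(1) eq] show "a \<le> word_op s w x" by simp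
qed (use assms in \<open>auto simp: atom_rep_def\<close>)

context
  fixes n :: nat and s :: "nat \<Rightarrow> nat \<Rightarrow> 'a::boolean_algebra \<Rightarrow> 'a"
  assumes TA: "TA n s" and n_pos: "0 < n"
begin

lemma atom_rep_inf: "atom_rep n s (inf x y) = atom_rep n s x \<inter> atom_rep n s y"
proof (rule atom_points_eqI)
  show "atom_rep n s x \<inter> atom_rep n s y \<subseteq> atom_points n"
    using atom_rep_subset[of n s] by blast
qed (simp_all add: atom_rep_subset mem_atom_rep_iff[OF TA n_pos] TA_word_op_hom[OF TA])

lemma atom_rep_compl: "atom_rep n s (- x) = atom_points n - atom_rep n s x"
  by (rule atom_points_eqI[where n = n])
    (simp_all add: atom_rep_subset Diff_subset mem_atom_rep_iff[OF TA n_pos] TA_word_op_hom[OF TA]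
      atom_le_compl_iff mem_atom_points)

lemma atom_rep_subst:
  assumes "i < n" "j < n" "i \<noteq> j"
  shows "atom_rep n s (s i j x) = S_op (atom_points n) i j (atom_rep n s x)"
proof (rule atom_points_eqI)
  show "S_op (atom_points n) i j (atom_rep n s x) \<subseteq> atom_points n"
    by (auto simp: S_op_def)
  fix a :: 'a and w assume "is_atom a" "word_ok n w"
  then show "tagged_perm n a w \<in> atom_rep n s (s i j x)
      \<longleftrightarrow> tagged_perm n a w \<in> S_op (atom_points n) i j (atom_rep n s x)"
    using assms by (simp add: S_op_def mem_atom_points mem_atom_rep_iff[OF TA n_pos]
      tagged_perm_comp_transpose word_op_snoc)
qed (rule atom_rep_subset)

lemma inj_atom_rep:
  assumes "atomic_BA TYPE('a)"
  shows "inj (atom_rep n s)"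
proof (rule injI)
  fix x y assume eq: "atom_rep n s x = atom_rep n s y"
  show "x = y"
  proof (rule atomic_eqI[OF assms])
    fix a :: 'a assume "is_atom a"
    then show "a \<le> x \<longleftrightarrow> a \<le> y"
      using eq mem_atom_rep_iff[OF TA n_pos \<open>is_atom a\<close> word_ok_Nil] by (metis id_apply word_op_Nil)
  qed
qed

lemma atom_rep_glb:
  assumes "is_glb Y p"
  shows "atom_rep n s p = atom_points n \<inter> (\<Inter>y\<in>Y. atom_rep n s y)"
proof (rule atom_points_eqI)
  fix a :: 'a and w assume "is_atom a" "word_ok n w"
  then show "tagged_perm n a w \<in> atom_rep n s p
      \<longleftrightarrow> tagged_perm n a w \<in> atom_points n \<inter> (\<Inter>y\<in>Y. atom_rep n s y)"
    using is_glb_iff[OF TA_word_op_is_glb[OF TA _ assms]]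
    by (simp add: mem_atom_rep_iff[OF TA n_pos] mem_atom_points)
qed (auto simp: atom_rep_subset)

lemma complete_rep_atom_rep:
  assumes "atomic_BA TYPE('a)"
  shows "complete_rep n s (atom_points n) (atom_rep n s)"
  unfolding complete_rep_def
  by (intro conjI allI impI permutable_atom_points atom_rep_subset atom_rep_inf atom_rep_compl
      atom_rep_subst inj_atom_rep[OF assms] atom_rep_glb)

end

theorem corollary3p24:
  fixes n :: nat and s :: "nat \<Rightarrow> nat \<Rightarrow> 'a::boolean_algebra \<Rightarrow> 'a"
  assumes "2 \<le> n" and "TA n s"
  shows "(\<forall>V (f :: 'a \<Rightarrow> (nat \<Rightarrow> 'u) set). complete_rep n s V f \<longrightarrow> atomic_BA TYPE('a))
       \<and> (atomic_BA TYPE('a) \<longrightarrow> (\<exists>V (f :: 'a \<Rightarrow> (nat \<Rightarrow> 'a \<times> nat) set). complete_rep n s V f))"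
proof (intro conjI allI impI)
  fix V and f :: "'a \<Rightarrow> (nat \<Rightarrow> 'u) set"
  assume "complete_rep n s V f"
  then show "atomic_BA TYPE('a)"
    by (intro complete_embedding_imp_atomic[of f V]) (simp_all add: complete_rep_def)
next
  assume "atomic_BA TYPE('a)"
  moreover have "0 < n" using assms(1) by simp
  ultimately show "\<exists>V (f :: 'a \<Rightarrow> (nat \<Rightarrow> 'a \<times> nat) set). complete_rep n s V f"
    using complete_rep_atom_rep[OF assms(2)] by blast
qed

end
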